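(* Assume Assumptions 1 and 2 hold and $\Delta=\{\delta:\|\delta\|_2\le\varepsilon\}$. Let $S,S'$ be datasets of size $n$ differing in only one sample $s$, and consider coupled runs of $A_{\text{Vanilla}}$ on $S$ and $S'$ with iterates $w_t,w'_t$ and $d^{(w)}_t=\|w_t-w'_t\|$. Then for every step $t$, $$\mathbb E[d^{(w)}_t]\le(1+\alpha_{w,t}\beta)\mathbb E[d^{(w)}_{t-1}]+\frac{\alpha_{w,t}\beta}{n}\Big(2\varepsilon n+\frac{2L}{\beta}\Big).$$
   Context: Loss $h(w,\delta;z)$, $w\in W$ Euclidean, $\delta\in\Delta$, Euclidean norms. Assumption 1: for every $z$, and all $w,w'\in W$, $\delta,\delta'\in\Delta$: $|h(w,\delta;z)-h(w',\delta';z)|^2\le L^2(\|w-w'\|^2+\|\delta-\delta'\|^2)$ and $|h(w,\delta;z)-h(w',\delta;z)|\le L_w\|w-w'\|$. Assumption 2: for every $z$, $h(\cdot,\cdot;z)$ is continuously differentiable and $\|\nabla_w h(w,\delta;z)-\nabla_w h(w',\delta';z)\|^2+\|\nabla_\delta h(w,\delta;z)-\nabla_\delta h(w',\delta';z)\|^2\le\beta^2(\|w-w'\|^2+\|\delta-\delta'\|^2)$. Algorithm $A_{\text{Vanilla}}$: from $w_0$, for $t=1,\dots,T$: draw a uniformly random mini-batch $B_t\subset S$ of size $b$; for each $z_j\in B_t$ pick $\delta_j\in\arg\max_{\delta\in\Delta}h(w_{t-1},\delta;z_j)$; set $w_t=w_{t-1}-\frac{\alpha_{w,t}}{b}\sum_{z_j\in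 B_t}\nabla_w h(w_{t-1},\delta_j;z_j)$. Coupling: both runs use the same initialization and the same mini-batch index sets, so the batches differ only if they contain the index of $s$, which happens with probability $b/n$. Expectation is over the mini-batch randomness. *)

theory Defs
  imports "HOL-Analysis.Analysis" "HOL-Probability.Probability"
begin

text \<open>Iterates of the vanilla adversarial SGD algorithm.
  b: mini-batch size; w0: initialization; alpha t: step size at step t;
  sel t j w z: the chosen maximizer delta_j (for sample index j at step t, current iterate w);
  gw w d z: the gradient of h(.,d;z) with respect to w at w;
  S j: the j-th sample of the dataset (indices 0..<n);
  B t: the mini-batch (set of indices) drawn at step t.\<close>
fun vanilla_iter ::
  "nat \<Rightarrow> 'w::euclidean_space \<Rightarrow> (nat \<Rightarrow> real) \<Rightarrow> (nat \<Rightarrow> nat \<Rightarrow> 'w \<Rightarrow> 'z \<Rightarrow> 'd)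
   \<Rightarrow> ('w \<Rightarrow> 'd \<Rightarrow> 'z \<Rightarrow> 'w) \<Rightarrow> (nat \<Rightarrow> 'z) \<Rightarrow> (nat \<Rightarrow> nat set) \<Rightarrow> nat \<Rightarrow> 'w"
where
  "vanilla_iter b w0 alpha sel gw S B 0 = w0"
| "vanilla_iter b w0 alpha sel gw S B (Suc t) =
     (let w = vanilla_iter b w0 alpha sel gw S B t
      in w - (alpha (Suc t) / real b) *\<^sub>R
             (\<Sum>j\<in>B (Suc t). gw w (sel (Suc t) j w (S j)) (S j)))"

text \<open>All sequences of mini-batches for steps 1..T, each a b-subset of the indices {0..<n}.
  Mini-batches are drawn uniformly and independently, i.e. uniformly from this set.\<close>
definition batch_seqs :: "nat \<Rightarrow> nat \<Rightarrow> nat \<Rightarrow> (nat \<Rightarrow> nat set) set" where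
  "batch_seqs n b T = PiE {1..T} (\<lambda>_. {B. B \<subseteq> {..<n} \<and> card B = b})"

end

theory Submission
  imports Defs
begin

text \<open>In one step of the coupled runs, \<open>w\<^sub>t - w'\<^sub>t\<close> changes by \<open>\<alpha>\<^sub>t/b\<close> times the
  summed differences of per-sample gradients over the common mini-batch. For every sample other
  than the replaced one both runs use the same \<open>z\<close>, so \<open>\<beta>\<close>-smoothness together with
  \<open>\<parallel>\<delta> - \<delta>'\<parallel> \<le> 2\<epsilon>\<close> bounds the difference by \<open>\<beta>(d\<^sub>t\<^sub>-\<^sub>1 + 2\<epsilon>)\<close>; for the replaced sample
  both gradients have norm at most \<open>L\<close>, since \<open>h\<close> is \<open>L\<close>-Lipschitz in \<open>w\<close>. The replaced
  sample lies in the mini-batch with probability \<open>b/n\<close>; taking expectations gives the bound.\<close>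

lemma abs_derivative_le_lipschitz:
  fixes g :: "real \<Rightarrow> real"
  assumes deriv: "(g has_real_derivative D) (at x)"
    and lip: "\<And>y. \<bar>g y - g x\<bar> \<le> C * \<bar>y - x\<bar>"
  shows "\<bar>D\<bar> \<le> C"
proof -
  have "((\<lambda>y. \<bar>(g y - g x) / (y - x)\<bar>) \<longlongrightarrow> \<bar>D\<bar>) (at x)"
    using deriv by (intro tendsto_rabs) (simp add: has_field_derivative_iff)
  moreover have "eventually (\<lambda>y. \<bar>(g y - g x) / (y - x)\<bar> \<le> C) (at x)"
    unfolding eventually_at_filter
    by (intro always_eventually allI impI) (use lip in \<open>simp add: abs_divide divide_le_eq\<close>)
  ultimately show ?thesis
    by (rule tendsto_upperbound) simp
qed

lemma norm_gradient_le_lipschitz: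
  fixes f :: "'a::real_inner \<Rightarrow> real"
  assumes deriv: "(f has_derivative (\<lambda>x. g \<bullet> x)) (at w)"
    and lip: "\<And>x. \<bar>f x - f w\<bar> \<le> L * norm (x - w)"
    and L: "L \<ge> 0"
  shows "norm g \<le> L"
proof -
  have "((\<lambda>s. f (w + s *\<^sub>R g)) has_real_derivative g \<bullet> g) (at 0)"
  proof -
    have "((\<lambda>s. w + s *\<^sub>R g) has_derivative (\<lambda>s. s *\<^sub>R g)) (at 0)"
      by (auto intro!: derivative_eq_intros)
    moreover have "(f has_derivative (\<lambda>x. g \<bullet> x)) (at (w + 0 *\<^sub>R g))"
      using deriv by simp
    ultimately have "((\<lambda>s. f (w + s *\<^sub>R g)) has_derivative (\<lambda>s. g \<bullet> (s *\<^sub>R g))) (at 0)"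
      by (rule has_derivative_compose)
    then show ?thesis
      unfolding has_field_derivative_def
      by (rule has_derivative_eq_rhs) (simp add: fun_eq_iff)
  qed
  moreover have "\<bar>f (w + s *\<^sub>R g) - f (w + 0 *\<^sub>R g)\<bar> \<le> L * norm g * \<bar>s - 0\<bar>" for s
    using lip[of "w + s *\<^sub>R g"] by (simp add: mult_ac)
  ultimately have "\<bar>g \<bullet> g\<bar> \<le> L * norm g"
    by (rule abs_derivative_le_lipschitz)
  then have "norm g * norm g \<le> L * norm g"
    by (simp add: power2_norm_eq_inner[symmetric] power2_eq_square)
  then show ?thesis
    using L by (cases "norm g = 0") auto
qed

lemma has_derivative_partial_fst:
  fixes f :: "'a::real_normed_vector \<Rightarrow> 'b::real_normed_vector \<Rightarrow> 'c::real_normed_vector"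
  assumes "((\<lambda>p. f (fst p) (snd p)) has_derivative (\<lambda>p. f1 (fst p) + f2 (snd p)))
             (at (x, y) within (UNIV \<times> C))"
    and "y \<in> C" and "linear f2"
  shows "((\<lambda>x. f x y) has_derivative f1) (at x)"
proof -
  have pair: "((\<lambda>x. (x, y)) has_derivative (\<lambda>x. (x, 0))) (at x)"
    by (auto intro!: derivative_eq_intros)
  have "range (\<lambda>x. (x, y)) \<subseteq> UNIV \<times> C"
    using \<open>y \<in> C\<close> by auto
  then have "((\<lambda>p. f (fst p) (snd p)) has_derivative (\<lambda>p. f1 (fst p) + f2 (snd p)))
               (at (x, y) within range (\<lambda>x. (x, y)))"
    using assms(1) by (rule has_derivative_subset[rotated])
  from has_derivative_in_compose[OF pair this] show ?thesis
    using linear_0[OF \<open>linear f2\<close>] by simp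
qed

lemma sum_squares_le_imp_le_mult_add:
  fixes a c \<beta> x y :: real
  assumes "a\<^sup>2 + c\<^sup>2 \<le> \<beta>\<^sup>2 * (x\<^sup>2 + y\<^sup>2)" and "0 \<le> x" "0 \<le> y" "0 \<le> \<beta>"
  shows "a \<le> \<beta> * (x + y)"
proof -
  have "a \<le> sqrt (a\<^sup>2 + c\<^sup>2)"
    by (meson add_increasing2 real_le_rsqrt zero_le_power2 order_refl)
  also have "\<dots> \<le> sqrt (\<beta>\<^sup>2 * (x\<^sup>2 + y\<^sup>2))"
    using assms(1) by (rule real_sqrt_le_mono)
  also have "\<dots> = \<beta> * sqrt (x\<^sup>2 + y\<^sup>2)"
    using \<open>0 \<le> \<beta>\<close> by (simp add: real_sqrt_mult)
  also have "\<dots> \<le> \<beta> * (x + y)"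
    using assms(2-4) by (intro mult_left_mono sqrt_sum_squares_le_sum)
  finally show ?thesis .
qed

lemma norm_minibatch_step_diff_le:
  fixes G G' :: "nat \<Rightarrow> 'a::real_normed_vector"
  assumes J: "finite J" "card J = b" and b: "1 \<le> b" and \<alpha>: "0 \<le> \<alpha>"
    and G: "\<And>j. j \<in> J \<Longrightarrow> norm (G j - G' j) \<le> \<beta> * norm (w - w') + c + (if j = i then e else 0)"
  shows "norm ((w - (\<alpha> / real b) *\<^sub>R (\<Sum>j\<in>J. G j)) - (w' - (\<alpha> / real b) *\<^sub>R (\<Sum>j\<in>J. G' j)))
           \<le> (1 + \<alpha> * \<beta>) * norm (w - w') + \<alpha> * c + \<alpha> / real b * (if i \<in> J then e else 0)"
proof -
  have "norm (\<Sum>j\<in>J. G j - G' j) \<le> (\<Sum>j\<in>J. \<beta> * norm (w - w') + c + (if j = i then e else 0))"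
    by (rule order_trans[OF norm_sum sum_mono]) (rule G)
  also have "\<dots> = real b * (\<beta> * norm (w - w') + c) + (if i \<in> J then e else 0)"
    using J by (simp add: sum.distrib)
  finally have sum_le: "norm (\<Sum>j\<in>J. G j - G' j) \<le> \<dots>" .
  have "norm ((w - (\<alpha> / real b) *\<^sub>R (\<Sum>j\<in>J. G j)) - (w' - (\<alpha> / real b) *\<^sub>R (\<Sum>j\<in>J. G' j)))
      = norm ((w - w') - (\<alpha> / real b) *\<^sub>R (\<Sum>j\<in>J. G j - G' j))"
    by (simp add: sum_subtractf scaleR_diff_right algebra_simps)
  also have "\<dots> \<le> norm (w - w') + norm ((\<alpha> / real b) *\<^sub>R (\<Sum>j\<in>J. G j - G' j))"
    by (rule norm_triangle_ineq4)
  also have "\<dots> = norm (w - w') + \<alpha> / real b * norm (\<Sum>j\<in>J. G j - G' j)"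
    using \<alpha> by simp
  also have "\<dots> \<le> norm (w - w') + \<alpha> / real b * (real b * (\<beta> * norm (w - w') + c) + (if i \<in> J then e else 0))"
    using sum_le \<alpha> by (intro add_left_mono mult_left_mono) auto
  also have "\<dots> = (1 + \<alpha> * \<beta>) * norm (w - w') + \<alpha> * c + \<alpha> / real b * (if i \<in> J then e else 0)"
    using b by (simp add: field_simps)
  finally show ?thesis .
qed

locale adversarial_loss =
  fixes h :: "'w::euclidean_space \<Rightarrow> 'd::euclidean_space \<Rightarrow> 'z \<Rightarrow> real"
    and gw :: "'w \<Rightarrow> 'd \<Rightarrow> 'z \<Rightarrow> 'w"
    and gd :: "'w \<Rightarrow> 'd \<Rightarrow> 'z \<Rightarrow> 'd"
    and L \<beta> \<epsilon> :: real
  assumes L_nonneg: "L \<ge> 0" and beta_nonneg: "\<beta> \<ge> 0"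
    and lipschitz: "\<And>z w w' \<delta> \<delta>'. \<delta> \<in> cball 0 \<epsilon> \<Longrightarrow> \<delta>' \<in> cball 0 \<epsilon> \<Longrightarrow>
          \<bar>h w \<delta> z - h w' \<delta>' z\<bar>\<^sup>2 \<le> L\<^sup>2 * ((norm (w - w'))\<^sup>2 + (norm (\<delta> - \<delta>'))\<^sup>2)"
    and gradient: "\<And>z w \<delta>. \<delta> \<in> cball 0 \<epsilon> \<Longrightarrow>
          ((\<lambda>p. h (fst p) (snd p) z) has_derivative (\<lambda>p. gw w \<delta> z \<bullet> fst p + gd w \<delta> z \<bullet> snd p))
            (at (w, \<delta>) within (UNIV \<times> cball 0 \<epsilon>))"
    and smooth: "\<And>z w w' \<delta> \<delta>'. \<delta> \<in> cball 0 \<epsilon> \<Longrightarrow> \<delta>' \<in> cball 0 \<epsilon> \<Longrightarrow>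
          (norm (gw w \<delta> z - gw w' \<delta>' z))\<^sup>2 + (norm (gd w \<delta> z - gd w' \<delta>' z))\<^sup>2
            \<le> \<beta>\<^sup>2 * ((norm (w - w'))\<^sup>2 + (norm (\<delta> - \<delta>'))\<^sup>2)"
begin

lemma norm_gw_le:
  assumes "\<delta> \<in> cball 0 \<epsilon>"
  shows "norm (gw w \<delta> z) \<le> L"
proof (rule norm_gradient_le_lipschitz)
  show "((\<lambda>x. h x \<delta> z) has_derivative (\<lambda>x. gw w \<delta> z \<bullet> x)) (at w)"
    using gradient[OF assms] assms
    by (rule has_derivative_partial_fst) (intro bounded_linear.linear bounded_linear_inner_right)
  show "\<bar>h x \<delta> z - h w \<delta> z\<bar> \<le> L * norm (x - w)" for x
  proof (rule power2_le_imp_le)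
    show "\<bar>h x \<delta> z - h w \<delta> z\<bar>\<^sup>2 \<le> (L * norm (x - w))\<^sup>2"
      using lipschitz[where z = z and w = x and w' = w and \<delta> = \<delta> and \<delta>' = \<delta>] assms
      by (simp add: power_mult_distrib)
  qed (simp add: L_nonneg)
qed (rule L_nonneg)

lemma norm_gw_diff_le:
  assumes "\<delta> \<in> cball 0 \<epsilon>" "\<delta>' \<in> cball 0 \<epsilon>"
  shows "norm (gw w \<delta> z - gw w' \<delta>' z) \<le> \<beta> * norm (w - w') + 2 * \<epsilon> * \<beta>"
proof -
  have "norm (gw w \<delta> z - gw w' \<delta>' z) \<le> \<beta> * (norm (w - w') + norm (\<delta> - \<delta>'))"
    using smooth[OF assms] by (rule sum_squares_le_imp_le_mult_add) (use beta_nonneg in auto)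
  also have "\<dots> \<le> \<beta> * (norm (w - w') + 2 * \<epsilon>)"
    using assms norm_triangle_ineq4[of \<delta> \<delta>'] beta_nonneg by (intro mult_left_mono) auto
  finally show ?thesis
    by (simp add: algebra_simps)
qed

lemma norm_gw_diff_le_add:
  assumes "\<delta> \<in> cball 0 \<epsilon>" "\<delta>' \<in> cball 0 \<epsilon>"
  shows "norm (gw w \<delta> z - gw w' \<delta>' z') \<le> \<beta> * norm (w - w') + 2 * \<epsilon> * \<beta> + 2 * L"
proof -
  have "norm (gw w \<delta> z - gw w' \<delta>' z') \<le> L + L"
    using norm_gw_le[OF assms(1)] norm_gw_le[OF assms(2)]
    by (meson add_mono norm_triangle_ineq4 order_trans)
  moreover have "0 \<le> \<epsilon>"
    using assms(1) norm_ge_zero order_trans by (simp, blast)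
  then have "0 \<le> \<beta> * norm (w - w') + 2 * \<epsilon> * \<beta>"
    using beta_nonneg by simp
  ultimately show ?thesis
    by simp
qed

lemma norm_vanilla_iter_diff_Suc_le:
  assumes sel: "\<And>k j w z. sel k j w z \<in> cball 0 \<epsilon>" "\<And>k j w z. sel' k j w z \<in> cball 0 \<epsilon>"
    and batch: "finite (B (Suc k))" "card (B (Suc k)) = b" "1 \<le> b"
    and "0 \<le> alpha (Suc k)"
    and same_sample: "\<And>j. j \<in> B (Suc k) \<Longrightarrow> j \<noteq> i \<Longrightarrow> S' j = S j"
  shows "norm (vanilla_iter b w0 alpha sel gw S B (Suc k) - vanilla_iter b w0 alpha sel' gw S' B (Suc k))
    \<le> (1 + alpha (Suc k) * \<beta>) * norm (vanilla_iter b w0 alpha sel gw S B k - vanilla_iter b w0 alpha sel' gw S' B k)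
      + alpha (Suc k) * (2 * \<epsilon> * \<beta>) + alpha (Suc k) / real b * (if i \<in> B (Suc k) then 2 * L else 0)"
  unfolding vanilla_iter.simps Let_def
proof (rule norm_minibatch_step_diff_le[OF batch \<open>0 \<le> alpha (Suc k)\<close>])
  fix j w w'
  assume "j \<in> B (Suc k)"
  show "norm (gw w (sel (Suc k) j w (S j)) (S j) - gw w' (sel' (Suc k) j w' (S' j)) (S' j))
          \<le> \<beta> * norm (w - w') + 2 * \<epsilon> * \<beta> + (if j = i then 2 * L else 0)"
  proof (cases "j = i")
    case True
    then show ?thesis
      using norm_gw_diff_le_add[OF sel] by simp
  next
    case False
    then show ?thesis
      using norm_gw_diff_le[OF sel] same_sample[OF \<open>j \<in> B (Suc k)\<close>] by simp
  qed
qed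

end

lemma card_subsets_mem:
  assumes "finite A" "x \<in> A"
  shows "card {X. X \<subseteq> A \<and> card X = Suc k \<and> x \<in> X} = (card A - 1) choose k"
proof -
  let ?Y = "{Y. Y \<subseteq> A - {x} \<and> card Y = k}"
  have "{X. X \<subseteq> A \<and> card X = Suc k \<and> x \<in> X} = insert x ` ?Y"
  proof (intro set_eqI iffI)
    fix X assume "X \<in> {X. X \<subseteq> A \<and> card X = Suc k \<and> x \<in> X}"
    then have "X = insert x (X - {x})" "X - {x} \<in> ?Y"
      using finite_subset[OF _ \<open>finite A\<close>] by auto
    then show "X \<in> insert x ` ?Y" by blast
  qed (use assms finite_subset in \<open>auto simp: card_insert_if\<close>)
  moreover have "inj_on (insert x) ?Y"
    by (rule inj_onI) auto
  ultimately show ?thesis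
    using assms by (simp add: card_image n_subsets)
qed

lemma prob_pmf_of_set_subsets_mem:
  assumes A: "finite A" "x \<in> A" and k: "k \<le> card A"
  shows "measure_pmf.prob (pmf_of_set {X. X \<subseteq> A \<and> card X = k}) {X. x \<in> X} = k / card A"
proof (cases k)
  case 0
  then have "{X. X \<subseteq> A \<and> card X = k} = {{}}"
    using A finite_subset by fastforce
  then show ?thesis
    using 0 by (simp add: measure_pmf_of_set)
next
  case (Suc m)
  let ?K = "{X. X \<subseteq> A \<and> card X = k}"
  have card_K: "card ?K = card A choose k"
    using A by (simp add: n_subsets)
  have "?K \<inter> {X. x \<in> X} = {X. X \<subseteq> A \<and> card X = Suc m \<and> x \<in> X}"
    using Suc by auto
  then have card_Kx: "card (?K \<inter> {X. x \<in> X}) = (card A - 1) choose m"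
    using A by (simp add: card_subsets_mem)
  have "k * (card A choose k) = card A * ((card A - 1) choose m)"
    unfolding Suc by (rule binomial_absorption)
  then have "real k * (card A choose k) = real (card A) * ((card A - 1) choose m)"
    by (metis of_nat_mult)
  moreover have "card ?K > 0"
    using card_K k by simp
  moreover have "card A > 0"
    using A card_gt_0_iff by blast
  ultimately have "real (card (?K \<inter> {X. x \<in> X})) / card ?K = k / card A"
    by (simp add: card_K card_Kx field_simps)
  with \<open>card ?K > 0\<close> show ?thesis
    by (simp add: measure_pmf_of_set card_gt_0_iff)
qed

lemma map_pmf_of_set_PiE_component:
  assumes "finite I" "t \<in> I" "\<And>x. x \<in> I \<Longrightarrow> finite (B x)" "\<And>x. x \<in> I \<Longrightarrow> B x \<noteq> {}"
  shows "map_pmf (\<lambda>f. f t) (pmf_of_set (PiE I B)) = pmf_of_set (B t)"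
proof -
  have "PiE I B = PiE_dflt I undefined B"
    by (auto simp: PiE_dflt_def PiE_def extensional_def)
  then have "pmf_of_set (PiE I B) = Pi_pmf I undefined (\<lambda>x. pmf_of_set (B x))"
    using assms by (simp add: Pi_pmf_of_set)
  then show ?thesis
    using assms by (simp add: Pi_pmf_component)
qed

lemma finite_batch_seqs: "finite (batch_seqs n b T)"
  unfolding batch_seqs_def by (auto intro!: finite_PiE)

lemma batch_seqs_nonempty: "b \<le> n \<Longrightarrow> batch_seqs n b T \<noteq> {}"
  unfolding batch_seqs_def
  by (auto simp: PiE_eq_empty_iff intro!: exI[of _ "{..<b}"])

lemma prob_batch_seqs_mem:
  assumes "i < n" "b \<le> n" "t \<in> {1..T}"
  shows "measure_pmf.prob (pmf_of_set (batch_seqs n b T)) {B. i \<in> B t} = b / n"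
proof -
  let ?A = "{X. X \<subseteq> {..<n} \<and> card X = b}"
  have "?A \<noteq> {}"
    using assms by (auto intro!: exI[of _ "{..<b}"])
  then have "map_pmf (\<lambda>B. B t) (pmf_of_set (batch_seqs n b T)) = pmf_of_set ?A"
    unfolding batch_seqs_def using assms by (intro map_pmf_of_set_PiE_component) auto
  then have "measure_pmf.prob (pmf_of_set (batch_seqs n b T)) {B. i \<in> B t}
               = measure_pmf.prob (pmf_of_set ?A) {X. i \<in> X}"
    by (metis measure_map_pmf vimage_Collect_eq mem_Collect_eq)
  also have "\<dots> = b / n"
    using assms by (subst prob_pmf_of_set_subsets_mem) auto
  finally show ?thesis .
qed

lemma expectation_le_affine_indicator:
  fixes f g :: "'a \<Rightarrow> real"
  assumes "finite (set_pmf M)"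
    and "\<And>x. x \<in> set_pmf M \<Longrightarrow> f x \<le> a * g x + c + e * indicator X x"
  shows "measure_pmf.expectation M f
           \<le> a * measure_pmf.expectation M g + c + e * measure_pmf.prob M X"
proof -
  have int: "integrable M h" for h :: "'a \<Rightarrow> real"
    using assms(1) by (rule integrable_measure_pmf_finite)
  have "measure_pmf.expectation M f \<le> measure_pmf.expectation M (\<lambda>x. a * g x + c + e * indicator X x)"
    using assms(2) by (intro integral_mono_AE int) (simp add: AE_measure_pmf_iff)
  also have "\<dots> = a * measure_pmf.expectation M g + c + e * measure_pmf.prob M X"
    by (simp add: int)
  finally show ?thesis .
qed

theorem lemma4:
  fixes h :: "'w::euclidean_space \<Rightarrow> 'd::euclidean_space \<Rightarrow> 'z \<Rightarrow> real"
    and gw :: "'w \<Rightarrow> 'd \<Rightarrow> 'z \<Rightarrow> 'w"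
    and gd :: "'w \<Rightarrow> 'd \<Rightarrow> 'z \<Rightarrow> 'd"
    and L Lw \<beta> \<epsilon> :: real
    and n b T t i :: nat
    and S S' :: "nat \<Rightarrow> 'z"
    and w0 :: 'w
    and alpha :: "nat \<Rightarrow> real"
    and sel sel' :: "nat \<Rightarrow> nat \<Rightarrow> 'w \<Rightarrow> 'z \<Rightarrow> 'd"
  assumes eps: "\<epsilon> \<ge> 0"
    and L_nonneg: "L \<ge> 0" and beta_pos: "\<beta> > 0"
    and A1: "\<And>z w w' \<delta> \<delta>'. \<delta> \<in> cball 0 \<epsilon> \<Longrightarrow> \<delta>' \<in> cball 0 \<epsilon> \<Longrightarrow>
              \<bar>h w \<delta> z - h w' \<delta>' z\<bar>\<^sup>2 \<le> L\<^sup>2 * ((norm (w - w'))\<^sup>2 + (norm (\<delta> - \<delta>'))\<^sup>2)"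
    and A1w: "\<And>z w w' \<delta>. \<delta> \<in> cball 0 \<epsilon> \<Longrightarrow> \<bar>h w \<delta> z - h w' \<delta> z\<bar> \<le> Lw * norm (w - w')"
    and grad: "\<And>z w \<delta>. \<delta> \<in> cball 0 \<epsilon> \<Longrightarrow>
              ((\<lambda>p. h (fst p) (snd p) z) has_derivative
                 (\<lambda>p. gw w \<delta> z \<bullet> fst p + gd w \<delta> z \<bullet> snd p))
               (at (w, \<delta>) within (UNIV \<times> cball 0 \<epsilon>))"
    and grad_cont: "\<And>z. continuous_on (UNIV \<times> cball 0 \<epsilon>) (\<lambda>p. gw (fst p) (snd p) z)"
    and grad_cont': "\<And>z. continuous_on (UNIV \<times> cball 0 \<epsilon>) (\<lambda>p. gd (fst p) (snd p) z)"
    and A2: "\<And>z w w' \<delta> \<delta>'. \<delta> \<in> cball 0 \<epsilon> \<Longrightarrow> \<delta>' \<in> cball 0 \<epsilon> \<Longrightarrow>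
              (norm (gw w \<delta> z - gw w' \<delta>' z))\<^sup>2 + (norm (gd w \<delta> z - gd w' \<delta>' z))\<^sup>2
                \<le> \<beta>\<^sup>2 * ((norm (w - w'))\<^sup>2 + (norm (\<delta> - \<delta>'))\<^sup>2)"
    and b_pos: "1 \<le> b" and b_le: "b \<le> n"
    and i_lt: "i < n"
    and SS': "\<And>j. j < n \<Longrightarrow> j \<noteq> i \<Longrightarrow> S' j = S j"
    and alpha_nonneg: "\<And>k. alpha k \<ge> 0"
    and sel_max: "\<And>k j w z. sel k j w z \<in> cball 0 \<epsilon> \<and>
                     (\<forall>\<delta>\<in>cball 0 \<epsilon>. h w \<delta> z \<le> h w (sel k j w z) z)"
    and sel'_max: "\<And>k j w z. sel' k j w z \<in> cball 0 \<epsilon> \<and>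
                     (\<forall>\<delta>\<in>cball 0 \<epsilon>. h w \<delta> z \<le> h w (sel' k j w z) z)"
    and t_range: "t \<in> {1..T}"
  shows "measure_pmf.expectation (pmf_of_set (batch_seqs n b T))
           (\<lambda>B. norm (vanilla_iter b w0 alpha sel gw S B t - vanilla_iter b w0 alpha sel' gw S' B t))
         \<le> (1 + alpha t * \<beta>) *
             measure_pmf.expectation (pmf_of_set (batch_seqs n b T))
               (\<lambda>B. norm (vanilla_iter b w0 alpha sel gw S B (t - 1)
                          - vanilla_iter b w0 alpha sel' gw S' B (t - 1)))
           + (alpha t * \<beta> / real n) * (2 * \<epsilon> * real n + 2 * L / \<beta>)"
proof -
  interpret adversarial_loss h gw gd L \<beta> \<epsilon>
    using L_nonneg beta_pos A1 grad A2 by unfold_locales auto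
  let ?M = "pmf_of_set (batch_seqs n b T)"
  obtain k where t: "t = Suc k"
    using t_range by (cases t) auto
  define d where "d s B = norm (vanilla_iter b w0 alpha sel gw S B s - vanilla_iter b w0 alpha sel' gw S' B s)"
    for s B
  have "d t B \<le> (1 + alpha t * \<beta>) * d (t - 1) B + alpha t * (2 * \<epsilon> * \<beta>)
                + alpha t / real b * (2 * L) * indicator {B. i \<in> B t} B"
    if "B \<in> batch_seqs n b T" for B
  proof -
    have batch: "B (Suc k) \<subseteq> {..<n}" "card (B (Suc k)) = b"
      using that t_range unfolding batch_seqs_def t by auto
    have "d t B \<le> (1 + alpha t * \<beta>) * d (t - 1) B + alpha t * (2 * \<epsilon> * \<beta>)
                + alpha t / real b * (if i \<in> B t then 2 * L else 0)"
      unfolding d_def t diff_Suc_1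
      by (intro norm_vanilla_iter_diff_Suc_le)
        (use batch finite_subset[OF batch(1)] sel_max sel'_max b_pos alpha_nonneg SS' in auto)
    then show ?thesis
      by (cases "i \<in> B t") simp_all
  qed
  then have "measure_pmf.expectation ?M (d t)
      \<le> (1 + alpha t * \<beta>) * measure_pmf.expectation ?M (d (t - 1)) + alpha t * (2 * \<epsilon> * \<beta>)
        + alpha t / real b * (2 * L) * measure_pmf.prob ?M {B. i \<in> B t}"
    by (intro expectation_le_affine_indicator) (simp_all add: finite_batch_seqs batch_seqs_nonempty b_le)
  also have "\<dots> = (1 + alpha t * \<beta>) * measure_pmf.expectation ?M (d (t - 1))
        + (alpha t * \<beta> / real n) * (2 * \<epsilon> * real n + 2 * L / \<beta>)"
    using prob_batch_seqs_mem[OF i_lt b_le t_range] b_pos beta_pos i_lt by (simp add: field_simps)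
  finally show ?thesis
    unfolding d_def .
qed

end
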